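(* Let $N\ge1$, $k\ge2$, and consider the large-batch model of the round-based $k$IC batch labeling algorithm starting from the uniform class distribution $\pi_i=1/N$, $1\le i\le N$. Then the class distribution of the batch remains uniform in every round $r$, the settling probability in every round is $$P(s\in\mathcal{L}_r)=1-\frac{N}{k}\Big(1-\big(1-\tfrac{1}{N}\big)^k\Big),$$ and the average query rate over round $r$ alone, $R^{kIC}_{2,r}=1/(k\,P(s\in\mathcal{L}_r))$, and over rounds $1,\dots,r$, $R^{kIC}_{2,1:r}$, both equal $$\frac{1}{k-N\big(1-(1-\frac1N)^k\big)}.$$ Moreover this quantity is asymptotically equal to $\frac{2N}{k(k-1)}$ as $N\to\infty$ with $k$ fixed.
   Context: Large-batch model: in each round each $k$IC query consists of $k$ samples with i.i.d. classes drawn from the current batch class distribution $\boldsymbol{\pi}$; an error-free oracle reveals which samples share a class; one representative per class present is returned to the next batch and the others are settled. The settling probability $P(s\in\mathcal{L})$ is the expected number of settled samples per query divided by $k$, and the next batch's class distribution is $\pi'_i=\frac{1-(1-\pi_i)^k}{N-\sum_j(1-\pi_j)^k}$. Batch sizes evolve as $L_{r+1}=L_r(1-p_r)$ with $p_r$ the settling probability in round $r$; round $r$ uses $L_r/k$ queries and settles $L_rp_r$ samples; $R^{kIC}_{2,1:r}$ is total queries over rounds $1,\dots,r$ divided by total settled samples over these rounds. *)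

theory Defs
  imports "HOL-Analysis.Analysis" "HOL-Library.Landau_Symbols"
begin

text \<open>Large-batch model of round-based kIC batch labelling. Classes are indexed
  by 0..N-1; a class distribution is a function dst :: nat => real.\<close>

definition uniform_dist :: "nat \<Rightarrow> nat \<Rightarrow> real" where
  "uniform_dist N = (\<lambda>i. 1 / real N)"

definition next_dist :: "nat \<Rightarrow> nat \<Rightarrow> (nat \<Rightarrow> real) \<Rightarrow> (nat \<Rightarrow> real)" where
  "next_dist N k dst = (\<lambda>i. (1 - (1 - dst i) ^ k) /
      (real N - (\<Sum>j<N. (1 - dst j) ^ k)))"

text \<open>Settling probability: expected number of settled samples in one kIC query
  (k samples with i.i.d. classes from dst; all but one representative per
  present class are settled), divided by k.\<close>
definition settle_prob :: "nat \<Rightarrow> nat \<Rightarrow> (nat \<Rightarrow> real) \<Rightarrow> real" where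
  "settle_prob N k dst =
     (\<Sum>f\<in>PiE {..<k} (\<lambda>_. {..<N}).
        (\<Prod>j<k. dst (f j)) * real (k - card (f ` {..<k}))) / real k"

text \<open>Class distribution of round r (rounds are numbered from 1).\<close>
definition round_dist :: "nat \<Rightarrow> nat \<Rightarrow> nat \<Rightarrow> (nat \<Rightarrow> real)" where
  "round_dist N k r = (next_dist N k ^^ (r - 1)) (uniform_dist N)"

definition round_settle :: "nat \<Rightarrow> nat \<Rightarrow> nat \<Rightarrow> real" where
  "round_settle N k r = settle_prob N k (round_dist N k r)"

text \<open>Batch sizes: batch0 N k L s is L_{s+1}; L_1 = L, L_{r+1} = L_r (1 - p_r).\<close>
primrec batch0 :: "nat \<Rightarrow> nat \<Rightarrow> real \<Rightarrow> nat \<Rightarrow> real" where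
  "batch0 N k L 0 = L"
| "batch0 N k L (Suc s) = batch0 N k L s * (1 - round_settle N k (Suc s))"

definition batch :: "nat \<Rightarrow> nat \<Rightarrow> real \<Rightarrow> nat \<Rightarrow> real" where
  "batch N k L r = batch0 N k L (r - 1)"

definition rate_round :: "nat \<Rightarrow> nat \<Rightarrow> nat \<Rightarrow> real" where
  "rate_round N k r = 1 / (real k * round_settle N k r)"

definition rate_upto :: "nat \<Rightarrow> nat \<Rightarrow> real \<Rightarrow> nat \<Rightarrow> real" where
  "rate_upto N k L r =
     (\<Sum>i\<in>{1..r}. batch N k L i / real k) /
     (\<Sum>i\<in>{1..r}. batch N k L i * round_settle N k i)"

end

theory Submission
  imports Defs
begin

(* The uniform distribution is a fixed point of next_dist, because every class
   gets the same numerator 1 - (1 - 1/N)^k.  So every round has the same settling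
   probability p, computed from the expected number N (1 - (1 - 1/N)^k) of
   distinct classes among k uniform samples (a class is missed with probability
   (1 - 1/N)^k).  With p constant the batch sizes are geometric and queries per
   settled sample are 1/(k p) in each round and cumulatively.  Asymptotically,
   (1 - x)^k = 1 - k x + x^2 R(x) with a polynomial R, R(0) = k(k-1)/2, whence
   k - N (1 - (1 - 1/N)^k) = R(1/N) / N ~ k(k-1) / (2N). *)

lemma sum_card_image_PiE:
  assumes "finite A" "finite B"
  shows "(\<Sum>f\<in>PiE A (\<lambda>_. B). card (f ` A)) = card B * (card B ^ card A - (card B - 1) ^ card A)"
proof -
  let ?P = "PiE A (\<lambda>_. B)"
  have hitting: "card (?P \<inter> {f. c \<in> f ` A}) = card B ^ card A - (card B - 1) ^ card A"
    if "c \<in> B" for c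
  proof -
    let ?Q = "PiE A (\<lambda>_. B - {c})"
    have "?P \<inter> {f. c \<in> f ` A} = ?P - ?Q" by (auto simp: PiE_def Pi_def)
    moreover have "?Q \<subseteq> ?P" by (auto simp: PiE_def Pi_def)
    ultimately show ?thesis
      using assms that by (simp add: card_Diff_subset finite_PiE card_PiE)
  qed
  have "(\<Sum>f\<in>?P. card (f ` A)) = (\<Sum>f\<in>?P. \<Sum>c\<in>B. of_bool (c \<in> f ` A))"
  proof (rule sum.cong[OF refl])
    fix f assume "f \<in> ?P"
    then have "B \<inter> {c. c \<in> f ` A} = f ` A" by auto
    then show "card (f ` A) = (\<Sum>c\<in>B. of_bool (c \<in> f ` A))" using assms(2) by simp
  qed
  also have "\<dots> = (\<Sum>c\<in>B. \<Sum>f\<in>?P. of_bool (c \<in> f ` A))"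
    by (rule sum.swap)
  also have "\<dots> = (\<Sum>c\<in>B. card B ^ card A - (card B - 1) ^ card A)"
    using assms by (intro sum.cong) (simp_all add: finite_PiE hitting)
  finally show ?thesis by simp
qed

lemma settle_prob_uniform:
  assumes "N \<ge> 1" "k \<ge> 1"
  shows "settle_prob N k (uniform_dist N) = 1 - real N / real k * (1 - (1 - 1 / real N) ^ k)"
proof -
  let ?P = "PiE {..<k} (\<lambda>_. {..<N})"
  have distinct_classes: "(\<Sum>f\<in>?P. real (card (f ` {..<k}))) = real N * (real N ^ k - (real N - 1) ^ k)"
    using sum_card_image_PiE[of "{..<k}" "{..<N}"] assms
    by (simp add: of_nat_diff power_mono flip: of_nat_sum)
  have "(\<Sum>f\<in>?P. (\<Prod>j<k. uniform_dist N (f j)) * real (k - card (f ` {..<k})))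
      = (\<Sum>f\<in>?P. (1 / real N) ^ k * (real k - real (card (f ` {..<k}))))"
    by (intro sum.cong refl)
       (simp add: uniform_dist_def of_nat_diff[OF card_image_le[OF finite_lessThan, simplified]])
  also have "\<dots> = (1 / real N) ^ k * (real N ^ k * real k - real N * (real N ^ k - (real N - 1) ^ k))"
    by (simp add: sum_subtractf sum_distrib_left[symmetric] card_PiE distinct_classes)
  also have "\<dots> = real k * (1 - real N / real k * (1 - (1 - 1 / real N) ^ k))"
    using assms by (simp add: field_simps power_divide)
  finally show ?thesis using assms by (simp add: settle_prob_def)
qed

lemma next_dist_uniform:
  assumes "N \<ge> 1" "k \<ge> 1"
  shows "next_dist N k (uniform_dist N) = uniform_dist N"
proof
  fix i
  have "(1 - 1 / real N) ^ k < 1"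
    using assms by (intro power_less_one_iff[THEN iffD2]) (auto simp: field_simps)
  then have "real N - real N * (1 - 1 / real N) ^ k \<noteq> 0"
    using assms by auto
  then show "next_dist N k (uniform_dist N) i = uniform_dist N i"
    using assms by (simp add: next_dist_def uniform_dist_def field_simps)
qed

lemma round_dist_uniform:
  assumes "N \<ge> 1" "k \<ge> 1"
  shows "round_dist N k r = uniform_dist N"
proof -
  have "(next_dist N k ^^ m) (uniform_dist N) = uniform_dist N" for m
    by (induction m) (simp_all add: next_dist_uniform[OF assms])
  then show ?thesis by (simp add: round_dist_def)
qed

lemma batch0_const_settle:
  assumes "\<And>r. round_settle N k r = p"
  shows "batch0 N k L s = L * (1 - p) ^ s"
  by (induction s) (simp_all add: assms)

lemma rate_upto_const_settle:
  assumes settle: "\<And>r. round_settle N k r = p"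
    and "L > 0" "p \<le> 1" "r \<ge> 1"
  shows "rate_upto N k L r = 1 / (real k * p)"
proof -
  define S where "S = (\<Sum>i\<in>{1..r}. batch N k L i)"
  have batch: "batch N k L i = L * (1 - p) ^ (i - 1)" for i
    by (simp add: batch_def batch0_const_settle[OF settle])
  have "batch N k L 1 \<le> S"
    unfolding S_def using assms by (intro member_le_sum) (auto simp: batch)
  then have "S > 0" using assms by (simp add: batch)
  have "rate_upto N k L r = (S / real k) / (S * p)"
    by (simp add: rate_upto_def S_def settle sum_divide_distrib sum_distrib_right)
  also have "\<dots> = 1 / (real k * p)"
    using \<open>S > 0\<close> by simp
  finally show ?thesis .
qed

fun pow_remainder :: "nat \<Rightarrow> real \<Rightarrow> real" where
  "pow_remainder 0 x = 0"
| "pow_remainder (Suc k) x = (1 - x) * pow_remainder k x + real k"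

lemma one_minus_power_expansion:
  "(1 - x) ^ k = 1 - real k * x + x\<^sup>2 * pow_remainder k x"
proof (induction k)
  case (Suc k)
  have "(1 - x) ^ Suc k = (1 - x) * (1 - real k * x + x\<^sup>2 * pow_remainder k x)"
    using Suc by simp
  also have "\<dots> = 1 - real (Suc k) * x + x\<^sup>2 * pow_remainder (Suc k) x"
    by (simp add: algebra_simps power2_eq_square)
  finally show ?case .
qed simp

lemma isCont_pow_remainder: "isCont (pow_remainder k) x"
  by (induction k) (auto intro!: continuous_intros)

lemma pow_remainder_0: "pow_remainder k 0 = real k * (real k - 1) / 2"
  by (induction k) (auto simp: field_simps)

lemma uniform_rate_denominator:
  assumes "n > 0"
  shows "real k - real n * (1 - (1 - 1 / real n) ^ k) = pow_remainder k (1 / real n) / real n"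
  unfolding one_minus_power_expansion[of "1 / real n"]
  using assms by (simp add: field_simps power2_eq_square)

lemma uniform_rate_asymp_equiv:
  assumes "k \<ge> 2"
  shows "(\<lambda>n::nat. 1 / (real k - real n * (1 - (1 - 1 / real n) ^ k)))
         \<sim>[at_top] (\<lambda>n::nat. 2 * real n / (real k * (real k - 1)))"
proof -
  have "pow_remainder k 0 \<noteq> 0"
    using assms by (simp add: pow_remainder_0)
  moreover have "((\<lambda>n::nat. pow_remainder k (1 / real n)) \<longlongrightarrow> pow_remainder k 0) at_top"
    by (rule isCont_tendsto_compose[OF isCont_pow_remainder lim_const_over_n])
  ultimately have "(\<lambda>n::nat. pow_remainder k (1 / real n)) \<sim>[at_top] (\<lambda>_. pow_remainder k 0)"
    by (rule tendsto_imp_asymp_equiv_const[rotated])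
  then have "(\<lambda>n::nat. real n / pow_remainder k (1 / real n))
      \<sim>[at_top] (\<lambda>n. real n / pow_remainder k 0)"
    by (intro asymp_equiv_divide asymp_equiv_refl)
  moreover have "\<forall>\<^sub>F n in at_top. real n / pow_remainder k (1 / real n)
      = 1 / (real k - real n * (1 - (1 - 1 / real n) ^ k))"
    using eventually_gt_at_top[of 0] by eventually_elim (simp add: uniform_rate_denominator)
  moreover have "real n / pow_remainder k 0 = 2 * real n / (real k * (real k - 1))" for n
    by (simp add: pow_remainder_0)
  ultimately show ?thesis
    by (auto elim: asymp_equiv_transfer)
qed

theorem corollary3:
  fixes N k :: nat and L :: real
  assumes "N \<ge> 1" and "k \<ge> 2" and "L > 0"
  shows "(\<forall>r\<ge>1. \<forall>i<N. round_dist N k r i = 1 / real N)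
    \<and> (\<forall>r\<ge>1. round_settle N k r =
          1 - real N / real k * (1 - (1 - 1 / real N) ^ k))
    \<and> (\<forall>r\<ge>1. rate_round N k r = 1 / (real k - real N * (1 - (1 - 1 / real N) ^ k)))
    \<and> (\<forall>r\<ge>1. rate_upto N k L r = 1 / (real k - real N * (1 - (1 - 1 / real N) ^ k)))
    \<and> ((\<lambda>n::nat. 1 / (real k - real n * (1 - (1 - 1 / real n) ^ k)))
         \<sim>[at_top] (\<lambda>n::nat. 2 * real n / (real k * (real k - 1))))"
proof -
  have "k \<ge> 1" using assms(2) by simp
  note uniform = round_dist_uniform[OF assms(1) this] settle_prob_uniform[OF assms(1) this]
  define p where "p = 1 - real N / real k * (1 - (1 - 1 / real N) ^ k)"
  have settle: "round_settle N k r = p" for r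
    by (simp add: round_settle_def uniform p_def)
  have "(1 - 1 / real N) ^ k \<le> 1"
    using assms by (intro power_le_one) (auto simp: field_simps)
  then have "p \<le> 1" by (simp add: p_def)
  have rate: "1 / (real k * p) = 1 / (real k - real N * (1 - (1 - 1 / real N) ^ k))"
    using assms by (simp add: p_def algebra_simps)
  show ?thesis
  proof (intro conjI allI impI)
    fix r :: nat
    show "rate_round N k r = 1 / (real k - real N * (1 - (1 - 1 / real N) ^ k))"
      by (simp add: rate_round_def settle rate)
    assume "r \<ge> 1"
    show "rate_upto N k L r = 1 / (real k - real N * (1 - (1 - 1 / real N) ^ k))"
      using rate_upto_const_settle[OF settle \<open>L > 0\<close> \<open>p \<le> 1\<close> \<open>r \<ge> 1\<close>] rate by simp
  qed (simp_all add: uniform uniform_dist_def settle p_def uniform_rate_asymp_equiv[OF assms(2)])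
qed

end
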